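(* Let $m\ge1$, $k\ge1$, $n\ge2$, let $\ell=(\ell_1,\dots,\ell_m)$ with $\ell_i\ge0$, $\sum_i\ell_i=1$, and let $\mathbf{P}=(p_{ij})$ be a symmetric $m\times m$ matrix with entries in $[0,1]$. Let $G=(V,E)$ be a random graph on $n=|V|$ nodes drawn from $\mathcal{W}_k(\mathbf{P},\ell)$, and let $s=\sum_{i,j\in[m]}p_{ij}\ell_i\ell_j$. Then: (i) for every integer $1\le d\le n-1$, $$\mathbb{E}[S_d]=n\binom{n-1}{d}\Bigl(\sum_{i_1,\dots,i_{d+1}\in[m]}\prod_{j=2}^{d+1}p_{i_1i_j}\prod_{j=1}^{d+1}\ell_{i_j}\Bigr)^k;$$ in particular $\mathbb{E}[S_2]=n\binom{n-1}{2}\bigl(\sum_{i_1,i_2,i_3\in[m]}p_{i_1i_2}p_{i_1i_3}\ell_{i_1}\ell_{i_2}\ell_{i_3}\bigr)^k$. (ii) The variance of the number of edges is $$\operatorname{Var}(|E|)=\binom{n}{2}s^k\Bigl(1-\binom{n}{2}s^k\Bigr)+2\,\mathbb{E}[S_2]+\binom{n}{2}\binom{n-2}{2}s^{2k}.$$ (iii) For every integer $2\le t\le n$, $\mathbb{E}[C_t]=\binom{n}{t}s_t^k$, where $$s_t=\sum_{i_1,\dots,i_t\in[m]}\Bigl(\prod_{1\le j<q\le t}p_{i_ji_q}\Bigr)\ell_{i_1}\ell_{i_2}\cdots\ell_{i_t};$$ in particular $\mathbb{E}[C_3]=\binom{n}{3}\bigl(\sum_{i,j,t\in[m]}p_{ij}p_{it}p_{jt}\ell_i\ell_j\ell_t\bigr)^k$.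 (iv) Writing $D_d$ for the number of nodes of degree exactly $d$, one has $\mathbb{E}[D_{n-1}]=\mathbb{E}[S_{n-1}]$ and, for $1\le d\le n-2$, $$\mathbb{E}[D_d]=\mathbb{E}[S_d]-\sum_{i=d+1}^{n-1}\binom{i}{d}\mathbb{E}[D_i].$$
   Context: Multifractal network generator (MFNG). Given $m$, $\ell$, $\mathbf{P}$ and a recursion depth $k\ge1$, $\mathcal{W}_k(\mathbf{P},\ell)$ is the distribution of the undirected random graph on $n$ nodes produced as follows. (1) Partition $[0,1]$ into $m$ consecutive subintervals of lengths $\ell_1,\dots,\ell_m$; recursively partition each into $m$ pieces with relative lengths $\ell_1,\dots,\ell_m$, for $k$ levels in total, giving $m^k$ intervals indexed by $(i_1,\dots,i_k)\in[m]^k$ of lengths $\prod_r\ell_{i_r}$. (2) Each node is placed at an independent uniform point of $[0,1]$ and receives the category tuple $c(u)=(i_1,\dots,i_k)$ of its interval. (3) Conditionally on the categories, independently for each pair of distinct nodes $u,v$ with $c(u)=(i_1,\dots,i_k)$, $c(v)=(j_1,\dots,j_k)$, the edge $\{u,v\}$ is present with probability $\prod_{r=1}^kp_{i_rj_r}$. Subgraph counts. A $d$-star is a graph on $d+1$ vertices in which one center vertex is joined to each of the other $d$ vertices (and no other edges). $S_d$ denotes the number of (not necessarily induced) $d$-stars in $G$, counted as the number of pairs $(v,D)$ with $v\in V$ and $D$ a $d$-element subset of the neighbors of $v$; $2$-stars are called wedges. A $t$-clique is a set of $t$ vertices that are pairwise adjacent; $C_t$ denotes the number of $t$-cliques in $G$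 ($3$-cliques are triangles). *)

theory Defs
  imports "HOL-Probability.Probability"
begin

text \<open>Categories at each level are indices 0..m-1,
  the length vector is l :: nat => real (entries l 0 .. l (m-1)), the probability
  matrix is P :: nat => nat => real. Nodes are 0..n-1. A graph is represented by its
  edge set, a set of pairs (u,v) with u < v < n.\<close>

text \<open>Distribution of the level-index of a uniform point: index i with probability l i
  (the length of the i-th subinterval).\<close>
definition level_pmf :: "nat \<Rightarrow> (nat \<Rightarrow> real) \<Rightarrow> nat pmf" where
  "level_pmf m l = embed_pmf (\<lambda>i. if i < m then l i else 0)"

text \<open>Category tuple (i_1,...,i_k), encoded as a function on {0..<k}: a uniform point of
  [0,1] falls into the interval indexed by (i_1,...,i_k) with probability equal to its length
  prod_r l_{i_r}, i.e. the levels are independent.\<close>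
definition category_pmf :: "nat \<Rightarrow> (nat \<Rightarrow> real) \<Rightarrow> nat \<Rightarrow> (nat \<Rightarrow> nat) pmf" where
  "category_pmf m l k = Pi_pmf {0..<k} 0 (\<lambda>_. level_pmf m l)"

definition edge_prob :: "(nat \<Rightarrow> nat \<Rightarrow> real) \<Rightarrow> nat \<Rightarrow> (nat \<Rightarrow> nat) \<Rightarrow> (nat \<Rightarrow> nat) \<Rightarrow> real" where
  "edge_prob P k cu cv = (\<Prod>r<k. P (cu r) (cv r))"

definition node_pairs :: "nat \<Rightarrow> (nat \<times> nat) set" where
  "node_pairs n = {(u,v). u < v \<and> v < n}"

definition mfng :: "nat \<Rightarrow> nat \<Rightarrow> (nat \<Rightarrow> real) \<Rightarrow> (nat \<Rightarrow> nat \<Rightarrow> real) \<Rightarrow> nat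
                     \<Rightarrow> (nat \<times> nat) set pmf" where
  "mfng n m l P k =
     do { c \<leftarrow> Pi_pmf {0..<n} (\<lambda>_. 0) (\<lambda>_. category_pmf m l k);
          b \<leftarrow> Pi_pmf (node_pairs n) False
                 (\<lambda>(u,v). bernoulli_pmf (edge_prob P k (c u) (c v)));
          return_pmf {e \<in> node_pairs n. b e} }"

definition adj :: "(nat \<times> nat) set \<Rightarrow> nat \<Rightarrow> nat \<Rightarrow> bool" where
  "adj E u v \<longleftrightarrow> u \<noteq> v \<and> (min u v, max u v) \<in> E"

definition nbrs :: "nat \<Rightarrow> (nat \<times> nat) set \<Rightarrow> nat \<Rightarrow> nat set" where
  "nbrs n E v = {u. u < n \<and> adj E v u}"

definition stars :: "nat \<Rightarrow> nat \<Rightarrow> (nat \<times> nat) set \<Rightarrow> nat" where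
  "stars n d E = card {(v, D). v < n \<and> D \<subseteq> nbrs n E v \<and> card D = d}"

definition cliques :: "nat \<Rightarrow> nat \<Rightarrow> (nat \<times> nat) set \<Rightarrow> nat" where
  "cliques n t E = card {S. S \<subseteq> {0..<n} \<and> card S = t \<and>
                              (\<forall>u\<in>S. \<forall>v\<in>S. u \<noteq> v \<longrightarrow> adj E u v)}"

definition deg_count :: "nat \<Rightarrow> nat \<Rightarrow> (nat \<times> nat) set \<Rightarrow> nat" where
  "deg_count n d E = card {v. v < n \<and> card (nbrs n E v) = d}"

definition s_clique :: "nat \<Rightarrow> (nat \<Rightarrow> real) \<Rightarrow> (nat \<Rightarrow> nat \<Rightarrow> real) \<Rightarrow> nat \<Rightarrow> real" where
  "s_clique m l P t = (\<Sum>f \<in> {0..<t} \<rightarrow>\<^sub>E {0..<m}.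
      (\<Prod>(j,q) \<in> {(j,q). j < q \<and> q < t}. P (f j) (f q)) * (\<Prod>j<t. l (f j)))"

text \<open>Star sum: over (i_1..i_{d+1}) in [m]^{d+1}, with i_1 the centre (index 0 here).\<close>
definition s_star :: "nat \<Rightarrow> (nat \<Rightarrow> real) \<Rightarrow> (nat \<Rightarrow> nat \<Rightarrow> real) \<Rightarrow> nat \<Rightarrow> real" where
  "s_star m l P d = (\<Sum>f \<in> {0..<d+1} \<rightarrow>\<^sub>E {0..<m}.
      (\<Prod>j\<in>{1..d}. P (f 0) (f j)) * (\<Prod>j\<in>{0..d}. l (f j)))"

end

theory Submission
  imports Defs
begin

text \<open>Conditionally on the categories all edges are independent, and the k levels of the
  categories are independent across levels. Hence for a fixed set F of node pairs,
  Pr[F \<subseteq> E] factorises over the levels into the k-th power of a one-level homomorphism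
  density: the expectation of \<Prod>(a,b)\<in>F. P (x a) (x b) for independent level labels x
  with distribution l. Every count in the theorem is a sum of indicators [F \<subseteq> E] over
  copies F of a fixed pattern, and the density only depends on the isomorphism type of F
  (a d-star, a t-clique, one edge, two edges sharing an endpoint, two disjoint edges), which
  gives the expectations and, via E[|E|^2] = \<Sum>e f. Pr[{e,f} \<subseteq> E], the variance.
  The degree identities follow from S_d = \<Sum>v. (deg v choose d).\<close>

lemma prod_if_0:
  assumes "finite A"
  shows "(\<Prod>x\<in>A. if Q x then f x else (0::real)) = (if \<forall>x\<in>A. Q x then \<Prod>x\<in>A. f x else 0)"
  using assms by (auto intro: prod.cong prod_zero)

lemma finite_node_pairs: "finite (node_pairs n)"
  by (rule finite_subset[of _ "{..<n} \<times> {..<n}"]) (auto simp: node_pairs_def)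

lemma card_node_pairs: "card (node_pairs n) = n choose 2"
proof (induction n)
  case 0 then show ?case by (simp add: node_pairs_def)
next
  case (Suc n)
  have split: "node_pairs (Suc n) = node_pairs n \<union> (\<lambda>u. (u, n)) ` {..<n}"
    by (auto simp: node_pairs_def less_Suc_eq)
  have "card (node_pairs (Suc n)) = card (node_pairs n) + card ((\<lambda>u. (u, n)) ` {..<n})"
    unfolding split by (rule card_Un_disjoint[OF finite_node_pairs]) (auto simp: node_pairs_def)
  also have "\<dots> = (n choose 2) + n" by (simp add: Suc card_image inj_on_def)
  finally show ?case by (simp add: numeral_2_eq_2)
qed

lemma real_choose_two: "real (x choose 2) = real x * (real x - 1) / 2"
proof -
  have "even (x * (x - 1))" by auto
  then show ?thesis by (cases x) (simp_all add: choose_two real_of_nat_div algebra_simps)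
qed

lemma sum_PiE_lessThan_Suc:
  "(\<Sum>f\<in>{..<Suc t} \<rightarrow>\<^sub>E M. g f) = (\<Sum>f\<in>{..<t} \<rightarrow>\<^sub>E M. \<Sum>a\<in>M. g (f(t := a)))"
proof -
  have "(\<Sum>f\<in>{..<Suc t} \<rightarrow>\<^sub>E M. g f) = (\<Sum>f\<in>(\<lambda>(y, g). g(t := y)) ` (M \<times> ({..<t} \<rightarrow>\<^sub>E M)). g f)"
    by (simp add: lessThan_Suc PiE_insert_eq)
  also have "\<dots> = (\<Sum>p\<in>M \<times> ({..<t} \<rightarrow>\<^sub>E M). g ((\<lambda>(y, g). g(t := y)) p))"
    by (rule sum.reindex[unfolded comp_def]) (use inj_combinator[of t "{..<t}" "\<lambda>_. M"] in simp)
  also have "\<dots> = (\<Sum>f\<in>{..<t} \<rightarrow>\<^sub>E M. \<Sum>a\<in>M. g (f(t := a)))"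
    by (subst sum.swap) (simp add: sum.cartesian_product split_def)
  finally show ?thesis .
qed

lemma s_star_1: "s_star m l P 1 = (\<Sum>i<m. \<Sum>j<m. P i j * l i * l j)"
  unfolding s_star_def
  by (simp add: atLeast0LessThan numeral_2_eq_2 sum_PiE_lessThan_Suc[of _ _ "{..<m}"]
      atLeast0_atMost_Suc mult_ac)

lemma s_star_2:
  "s_star m l P 2 = (\<Sum>i1<m. \<Sum>i2<m. \<Sum>i3<m. P i1 i2 * P i1 i3 * l i1 * l i2 * l i3)"
  unfolding s_star_def
  by (simp add: atLeast0LessThan numeral_3_eq_3 numeral_2_eq_2 sum_PiE_lessThan_Suc[of _ _ "{..<m}"]
      atLeast0_atMost_Suc atLeastAtMostSuc_conv mult_ac)

lemma s_clique_3:
  "s_clique m l P 3 = (\<Sum>i<m. \<Sum>j<m. \<Sum>t<m. P i j * P i t * P j t * l i * l j * l t)"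
proof -
  have "{(j,q). j < q \<and> q < (3::nat)} = {(0,1),(0,2),(1,2)}" by auto
  then show ?thesis
    unfolding s_clique_def
    by (simp add: atLeast0LessThan numeral_3_eq_3 sum_PiE_lessThan_Suc[of _ _ "{..<m}"]
        prod.lessThan_Suc numeral_2_eq_2 mult_ac)
qed

lemma stars_eq_sum_deg_count:
  "stars n d E = (\<Sum>i\<in>{0..n-1}. (i choose d) * deg_count n i E)"
proof -
  have nbrs_sub: "nbrs n E v \<subseteq> {0..<n} - {v}" for v by (auto simp: nbrs_def adj_def)
  then have finite_nbrs: "finite (nbrs n E v)" for v using finite_subset by blast
  have degree_bound: "card (nbrs n E v) \<le> n - 1" if "v < n" for v
    using card_mono[OF _ nbrs_sub[of v]] that by simp
  have "stars n d E = card (SIGMA v:{..<n}. {D. D \<subseteq> nbrs n E v \<and> card D = d})"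
    unfolding stars_def by (intro arg_cong[where f=card]) auto
  also have "\<dots> = (\<Sum>v<n. card (nbrs n E v) choose d)"
    by (subst card_SigmaI) (auto simp: n_subsets finite_nbrs)
  also have "\<dots> = (\<Sum>i\<in>{0..n-1}. \<Sum>v\<in>{v\<in>{..<n}. card (nbrs n E v) = i}. card (nbrs n E v) choose d)"
    by (rule sum.group[symmetric]) (use degree_bound in \<open>auto simp del: One_nat_def\<close>)
  also have "\<dots> = (\<Sum>i\<in>{0..n-1}. (i choose d) * deg_count n i E)"
    by (intro sum.cong refl) (simp add: deg_count_def)
  finally show ?thesis .
qed

lemma pmf_level_pmf:
  assumes "\<And>i. i < m \<Longrightarrow> l i \<ge> 0" and "(\<Sum>i<m. l i) = 1"
  shows "pmf (level_pmf m l) i = (if i < m then l i else 0)"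
  unfolding level_pmf_def
proof (rule pmf_embed_pmf)
  have "(\<integral>\<^sup>+ x. ennreal (if x < m then l x else 0) \<partial>count_space UNIV)
      = (\<Sum>x<m. ennreal (if x < m then l x else 0))"
    by (rule nn_integral_count_space') auto
  also have "\<dots> = ennreal (\<Sum>x<m. l x)"
    by (subst sum_ennreal) (auto simp: assms(1))
  finally show "(\<integral>\<^sup>+ x. ennreal (if x < m then l x else 0) \<partial>count_space UNIV) = 1"
    using assms(2) by simp
qed (use assms(1) in auto)

lemma set_pmf_level_pmf:
  assumes "\<And>i. i < m \<Longrightarrow> l i \<ge> 0" and "(\<Sum>i<m. l i) = 1"
  shows "set_pmf (level_pmf m l) \<subseteq> {..<m}"
  by (auto simp: set_pmf_eq pmf_level_pmf[OF assms] split: if_splits)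

text \<open>Only the entries of P indexed below m matter, so P may be replaced by its truncation,
  which is symmetric and [0,1]-valued everywhere.\<close>
definition trunc_matrix :: "nat \<Rightarrow> (nat \<Rightarrow> nat \<Rightarrow> real) \<Rightarrow> nat \<Rightarrow> nat \<Rightarrow> real" where
  "trunc_matrix m P i j = (if i < m \<and> j < m then P i j else 0)"

lemma s_star_trunc_matrix: "s_star m l (trunc_matrix m P) d = s_star m l P d"
  unfolding s_star_def trunc_matrix_def
  by (intro sum.cong refl arg_cong2[where f="(*)"] prod.cong) (auto simp: PiE_def Pi_def)

lemma s_clique_trunc_matrix: "s_clique m l (trunc_matrix m P) t = s_clique m l P t"
  unfolding s_clique_def trunc_matrix_def
  by (intro sum.cong refl arg_cong2[where f="(*)"] prod.cong) (auto simp: PiE_def Pi_def)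

lemma mfng_trunc_matrix:
  assumes "\<And>i. i < m \<Longrightarrow> l i \<ge> 0" and "(\<Sum>i<m. l i) = 1"
  shows "mfng n m l (trunc_matrix m P) k = mfng n m l P k"
  unfolding mfng_def
proof (rule bind_pmf_cong[OF refl])
  fix c assume c: "c \<in> set_pmf (Pi_pmf {0..<n} (\<lambda>_. 0) (\<lambda>_. category_pmf m l k))"
  have "c u r < m" if "u < n" "r < k" for u r
  proof -
    have "c u \<in> set_pmf (category_pmf m l k)"
      using set_Pi_pmf_subset'[of "{0..<n}" "\<lambda>_. 0" "\<lambda>_. category_pmf m l k"] c that
      by (auto simp: PiE_dflt_def)
    then have "c u r \<in> set_pmf (level_pmf m l)"
      using set_Pi_pmf_subset'[of "{0..<k}" 0 "\<lambda>_. level_pmf m l"] that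
      by (auto simp: category_pmf_def PiE_dflt_def)
    then show ?thesis using set_pmf_level_pmf[OF assms] by auto
  qed
  then have "edge_prob (trunc_matrix m P) k (c u) (c v) = edge_prob P k (c u) (c v)"
    if "(u, v) \<in> node_pairs n" for u v
    using that by (auto simp: edge_prob_def trunc_matrix_def node_pairs_def intro!: prod.cong)
  then have "Pi_pmf (node_pairs n) False
               (\<lambda>(u,v). bernoulli_pmf (edge_prob (trunc_matrix m P) k (c u) (c v)))
           = Pi_pmf (node_pairs n) False (\<lambda>(u,v). bernoulli_pmf (edge_prob P k (c u) (c v)))"
    by (intro Pi_pmf_cong) auto
  then show "Pi_pmf (node_pairs n) False
               (\<lambda>(u,v). bernoulli_pmf (edge_prob (trunc_matrix m P) k (c u) (c v)))
             \<bind> (\<lambda>b. return_pmf {e \<in> node_pairs n. b e})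
           = Pi_pmf (node_pairs n) False (\<lambda>(u,v). bernoulli_pmf (edge_prob P k (c u) (c v)))
             \<bind> (\<lambda>b. return_pmf {e \<in> node_pairs n. b e})"
    by simp
qed

definition star_edges :: "nat \<Rightarrow> nat set \<Rightarrow> (nat \<times> nat) set" where
  "star_edges v D = (\<lambda>u. (min v u, max v u)) ` D"

definition clique_edges :: "nat set \<Rightarrow> (nat \<times> nat) set" where
  "clique_edges S = {(a,b). a \<in> S \<and> b \<in> S \<and> a < b}"

definition touching_pairs :: "nat \<Rightarrow> nat \<times> nat \<Rightarrow> (nat \<times> nat) set" where
  "touching_pairs n e = {f \<in> node_pairs n. f \<noteq> e \<and>
     (fst f = fst e \<or> fst f = snd e \<or> snd f = fst e \<or> snd f = snd e)}"

lemma card_touching_pairs: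
  assumes e: "e \<in> node_pairs n"
  shows "card (touching_pairs n e) = 2 * (n - 2)"
proof -
  obtain a b where ab: "e = (a,b)" "a < b" "b < n" using e by (auto simp: node_pairs_def)
  define R where "R = {0..<n} - {a,b}"
  have card_R: "card R = n - 2" using ab by (simp add: R_def card_Diff_subset)
  have "touching_pairs n e = star_edges a R \<union> star_edges b R"
  proof
    show "touching_pairs n e \<subseteq> star_edges a R \<union> star_edges b R"
    proof
      fix f assume "f \<in> touching_pairs n e"
      then obtain c d where f: "f = (c,d)" "c < d" "d < n" "(c,d) \<noteq> (a,b)"
          "c = a \<or> c = b \<or> d = a \<or> d = b"
        using ab by (auto simp: touching_pairs_def node_pairs_def) blast+
      then consider "c = a" "d \<in> R" | "c = b" "d \<in> R" | "d = a" "c \<in> R" | "d = b" "c \<in> R"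
        using ab unfolding R_def by auto
      then show "f \<in> star_edges a R \<union> star_edges b R"
      proof cases
        case 1 then show ?thesis using f ab by (auto simp: star_edges_def intro!: image_eqI[of _ _ d])
      next
        case 2 then show ?thesis using f ab by (auto simp: star_edges_def intro!: image_eqI[of _ _ d])
      next
        case 3 then show ?thesis using f ab by (auto simp: star_edges_def intro!: image_eqI[of _ _ c])
      next
        case 4 then show ?thesis using f ab by (auto simp: star_edges_def intro!: image_eqI[of _ _ c])
      qed
    qed
    show "star_edges a R \<union> star_edges b R \<subseteq> touching_pairs n e"
      using ab by (auto simp: touching_pairs_def star_edges_def R_def node_pairs_def min_def max_def
          split: if_splits)
  qed
  then have "card (touching_pairs n e) = card (star_edges a R) + card (star_edges b R)"
    by (simp, intro card_Un_disjoint)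
      (use ab in \<open>auto simp: star_edges_def R_def min_def max_def split: if_splits\<close>)
  also have "\<dots> = 2 * (n - 2)"
    using card_R ab by (simp add: star_edges_def card_image inj_on_def R_def min_def max_def)
  finally show ?thesis .
qed

locale mfng_model =
  fixes n m k :: nat and l :: "nat \<Rightarrow> real" and P :: "nat \<Rightarrow> nat \<Rightarrow> real"
  assumes l_nonneg: "\<And>i. i < m \<Longrightarrow> l i \<ge> 0"
    and l_sum: "(\<Sum>i<m. l i) = 1"
    and P_sym: "\<And>i j. P i j = P j i"
    and P_nonneg: "\<And>i j. 0 \<le> P i j"
    and P_le_1: "\<And>i j. P i j \<le> 1"
begin

abbreviation labels :: "nat set \<Rightarrow> (nat \<Rightarrow> nat) pmf" where
  "labels S \<equiv> Pi_pmf S 0 (\<lambda>_. level_pmf m l)"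

definition hom_density :: "nat set \<Rightarrow> (nat \<times> nat) set \<Rightarrow> real" where
  "hom_density S F = measure_pmf.expectation (labels S) (\<lambda>x. \<Prod>(a,b)\<in>F. P (x a) (x b))"

lemma set_pmf_labels: "finite S \<Longrightarrow> set_pmf (labels S) \<subseteq> PiE_dflt S 0 (\<lambda>_. {..<m})"
  using set_Pi_pmf_subset'[of S 0 "\<lambda>_. level_pmf m l"] set_pmf_level_pmf[OF l_nonneg l_sum]
  by (auto simp: PiE_dflt_def)

lemma finite_set_pmf_labels: "finite S \<Longrightarrow> finite (set_pmf (labels S))"
  by (rule finite_subset[OF set_pmf_labels]) auto

lemma expectation_labels:
  assumes S: "finite S"
  shows "measure_pmf.expectation (labels S) \<phi> =
     (\<Sum>y\<in>S \<rightarrow>\<^sub>E {..<m}. \<phi> (\<lambda>x. if x \<in> S then y x else 0) * (\<Prod>a\<in>S. l (y a)))"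
proof -
  let ?e = "\<lambda>y x. if x \<in> S then y x else (0::nat)"
  have inj: "inj_on ?e (S \<rightarrow>\<^sub>E {..<m})"
  proof (rule inj_onI)
    fix y y' assume y: "y \<in> S \<rightarrow>\<^sub>E {..<m}" and y': "y' \<in> S \<rightarrow>\<^sub>E {..<m}" and eq: "?e y = ?e y'"
    show "y = y'"
    proof (rule PiE_ext[OF y y'])
      fix i assume "i \<in> S" then show "y i = y' i" using fun_cong[OF eq, of i] by simp
    qed
  qed
  have "measure_pmf.expectation (labels S) \<phi>
      = (\<Sum>a\<in>?e ` (S \<rightarrow>\<^sub>E {..<m}). \<phi> a * pmf (labels S) a)"
  proof (rule integral_measure_pmf_real)
    fix a assume "a \<in> set_pmf (labels S)"
    then show "a \<in> ?e ` (S \<rightarrow>\<^sub>E {..<m})"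
      unfolding dflt_image_PiE using set_pmf_labels[OF S] by blast
  qed (use S in \<open>intro finite_imageI finite_PiE; simp\<close>)
  also have "\<dots> = (\<Sum>y\<in>S \<rightarrow>\<^sub>E {..<m}. \<phi> (?e y) * pmf (labels S) (?e y))"
    by (rule sum.reindex[OF inj, unfolded comp_def])
  also have "\<dots> = (\<Sum>y\<in>S \<rightarrow>\<^sub>E {..<m}. \<phi> (?e y) * (\<Prod>a\<in>S. l (y a)))"
    by (intro sum.cong refl)
      (auto simp: pmf_Pi' S pmf_level_pmf[OF l_nonneg l_sum] PiE_def Pi_def intro!: prod.cong)
  finally show ?thesis .
qed

lemma hom_density_restrict:
  assumes "finite V" "S \<subseteq> V" "F \<subseteq> S \<times> S"
  shows "hom_density V F = hom_density S F"
proof -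
  have "hom_density S F = measure_pmf.expectation (labels V)
      (\<lambda>x. \<Prod>(a,b)\<in>F. P (if a \<in> S then x a else 0) (if b \<in> S then x b else 0))"
    unfolding hom_density_def by (subst Pi_pmf_subset[OF assms(1,2)]) simp
  also have "\<dots> = hom_density V F"
    unfolding hom_density_def
    by (intro Bochner_Integration.integral_cong refl prod.cong) (use assms(3) in auto)
  finally show ?thesis by simp
qed

lemma hom_density_relabel:
  assumes "finite V" "S \<subseteq> V" "F \<subseteq> S \<times> S" "finite T"
    and h: "bij_betw h T S" "\<And>x. x \<notin> T \<Longrightarrow> h x \<notin> S"
    and \<phi>: "\<And>x. (\<Prod>(a,b)\<in>F. P (x a) (x b)) = \<phi> (x \<circ> h)"
  shows "hom_density V F = measure_pmf.expectation (labels T) \<phi>"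
proof -
  have "hom_density V F = hom_density S F" by (rule hom_density_restrict[OF assms(1-3)])
  also have "\<dots> = measure_pmf.expectation (map_pmf (\<lambda>g. g \<circ> h) (labels S)) \<phi>"
    by (simp add: hom_density_def \<phi>)
  also have "\<dots> = measure_pmf.expectation (labels T) \<phi>"
    using Pi_pmf_bij_betw[OF \<open>finite T\<close> h, of 0 "level_pmf m l"] by simp
  finally show ?thesis .
qed

lemma expectation_labels_star:
  "measure_pmf.expectation (labels {0..<d+1}) (\<lambda>y. \<Prod>j\<in>{1..d}. P (y 0) (y j)) = s_star m l P d"
  unfolding s_star_def
  by (subst expectation_labels) (auto intro!: sum.cong prod.cong
      simp: atLeast0LessThan[symmetric] atLeastLessThanSuc_atLeastAtMost)

lemma expectation_labels_clique:
  "measure_pmf.expectation (labels {0..<t}) (\<lambda>y. \<Prod>(j,q)\<in>{(j,q). j < q \<and> q < t}. P (y j) (y q))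
   = s_clique m l P t"
  unfolding s_clique_def
  by (subst expectation_labels) (auto intro!: sum.cong prod.cong simp: atLeast0LessThan[symmetric])

lemma hom_density_star:
  assumes v: "v < n" and D: "D \<subseteq> {0..<n} - {v}" "card D = d"
  shows "hom_density {0..<n} (star_edges v D) = s_star m l P d"
proof -
  have "finite D" using D(1) finite_subset by blast
  then obtain f where f: "bij_betw f {1..d} D" using ex_bij_betw_nat_finite_1 D(2) by blast
  define h where "h j = (if j = 0 then v else if j \<le> d then f j else n + j)" for j
  have "bij_betw h {1..d} D" using f by (rule bij_betw_cong[THEN iffD1, rotated]) (simp add: h_def)
  then have "bij_betw h ({1..d} \<union> {0}) (D \<union> {h 0})"
    by (rule notIn_Un_bij_betw[rotated 2]) (use D(1) in \<open>auto simp: h_def\<close>)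
  moreover have "{1..d} \<union> {0} = {0..<d+1}" "D \<union> {h 0} = insert v D" by (auto simp: h_def)
  ultimately have h: "bij_betw h {0..<d+1} (insert v D)" by simp
  have inj: "inj_on (\<lambda>u. (min v u, max v u)) D"
    using D by (auto intro!: inj_onI simp: min_def max_def split: if_splits)
  have "(\<Prod>(a,b)\<in>star_edges v D. P (x a) (x b)) = (\<Prod>j\<in>{1..d}. P ((x \<circ> h) 0) ((x \<circ> h) j))"
    for x
  proof -
    have "(\<Prod>(a,b)\<in>star_edges v D. P (x a) (x b)) = (\<Prod>u\<in>D. P (x v) (x u))"
      unfolding star_edges_def prod.reindex[OF inj]
      by (intro prod.cong refl) (auto simp: min_def max_def P_sym)
    also have "\<dots> = (\<Prod>j\<in>{1..d}. P ((x \<circ> h) 0) ((x \<circ> h) j))"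
      using prod.reindex_bij_betw[OF f, of "\<lambda>u. P (x v) (x u)"] by (simp add: h_def)
    finally show ?thesis .
  qed
  then have "hom_density {0..<n} (star_edges v D)
      = measure_pmf.expectation (labels {0..<d+1}) (\<lambda>y. \<Prod>j\<in>{1..d}. P (y 0) (y j))"
    by (intro hom_density_relabel[OF _ _ _ _ h])
      (use v D in \<open>auto simp: h_def star_edges_def min_def max_def split: if_splits\<close>)
  then show ?thesis by (simp only: expectation_labels_star)
qed

lemma hom_density_edge:
  "a < b \<Longrightarrow> b < n \<Longrightarrow> hom_density {0..<n} {(a,b)} = (\<Sum>i<m. \<Sum>j<m. P i j * l i * l j)"
  using hom_density_star[of a "{b}" 1] s_star_1[of m l P] by (simp add: star_edges_def)

lemma hom_density_clique:
  assumes S: "S \<subseteq> {0..<n}" "card S = t"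
  shows "hom_density {0..<n} (clique_edges S) = s_clique m l P t"
proof -
  have "finite S" using S finite_subset by blast
  then obtain f where f: "bij_betw f {..<t} S" and mono: "strict_mono_on {..<t} f"
    using ex_bij_betw_strict_mono_card S by metis
  define h where "h j = (if j < t then f j else n + j)" for j
  have h: "bij_betw h {0..<t} S"
    using f by (auto simp: h_def bij_betw_def inj_on_def atLeast0LessThan image_def)
  let ?Q = "{(j,q). j < q \<and> q < t}"
  have f_less: "f i < f j \<longleftrightarrow> i < j" if "i < t" "j < t" for i j
    using mono that by (metis lessThan_iff linorder_neqE_nat order_less_asym strict_mono_onD)
  have "clique_edges S = (\<lambda>(j,q). (f j, f q)) ` ?Q"
  proof
    show "(\<lambda>(j,q). (f j, f q)) ` ?Q \<subseteq> clique_edges S"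
      using f f_less by (auto simp: clique_edges_def bij_betw_def)
    show "clique_edges S \<subseteq> (\<lambda>(j,q). (f j, f q)) ` ?Q"
    proof
      fix p assume "p \<in> clique_edges S"
      then obtain a b where ab: "p = (a,b)" "a \<in> S" "b \<in> S" "a < b"
        by (auto simp: clique_edges_def)
      then obtain i j where "i < t" "j < t" "a = f i" "b = f j"
        using f by (auto simp: bij_betw_def)
      then show "p \<in> (\<lambda>(j,q). (f j, f q)) ` ?Q" using ab f_less by (auto simp: image_iff)
    qed
  qed
  moreover have "inj_on (\<lambda>(j,q). (f j, f q)) ?Q"
    using f by (auto intro!: inj_onI simp: bij_betw_def inj_on_def)
  ultimately have "(\<Prod>(a,b)\<in>clique_edges S. P (x a) (x b))
      = (\<Prod>(j,q)\<in>?Q. P ((x \<circ> h) j) ((x \<circ> h) q))" for x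
    by (simp only: prod.reindex) (auto simp: h_def intro!: prod.cong)
  then have "hom_density {0..<n} (clique_edges S)
      = measure_pmf.expectation (labels {0..<t}) (\<lambda>y. \<Prod>(j,q)\<in>?Q. P (y j) (y q))"
    by (intro hom_density_relabel[OF _ _ _ _ h]) (use S in \<open>auto simp: h_def clique_edges_def\<close>)
  then show ?thesis by (simp only: expectation_labels_clique)
qed

lemma hom_density_disjoint_edges:
  assumes "a < b" "b < n" "c < d" "d < n" "a \<noteq> c" "a \<noteq> d" "b \<noteq> c" "b \<noteq> d"
  shows "hom_density {0..<n} {(a,b),(c,d)} = (\<Sum>i<m. \<Sum>j<m. P i j * l i * l j)\<^sup>2"
proof -
  define h where "h j = (if j = 0 then a else if j = 1 then b else if j = 2 then c
                         else if j = 3 then d else n + j)" for j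
  have four: "{0..<4::nat} = {0,1,2,3}" by auto
  have h: "bij_betw h {0..<4} {a,b,c,d}"
    unfolding four using assms by (auto simp: bij_betw_def h_def inj_on_def)
  have "hom_density {0..<n} {(a,b),(c,d)}
      = measure_pmf.expectation (labels {0..<4}) (\<lambda>y. P (y 0) (y 1) * P (y 2) (y 3))"
    by (intro hom_density_relabel[OF _ _ _ _ h]) (use assms in \<open>auto simp: h_def\<close>)
  also have "\<dots> = (\<Sum>i<m. \<Sum>j<m. \<Sum>p<m. \<Sum>q<m. (P i j * l i * l j) * (P p q * l p * l q))"
    by (subst expectation_labels) (simp_all add: atLeast0LessThan eval_nat_numeral
        sum_PiE_lessThan_Suc[of _ _ "{..<m}"] prod.lessThan_Suc mult_ac)
  also have "\<dots> = (\<Sum>i<m. \<Sum>j<m. P i j * l i * l j)\<^sup>2"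
    by (simp only: power2_eq_square sum_distrib_right sum_distrib_left) (simp add: ac_simps)
  finally show ?thesis .
qed

abbreviation categories :: "(nat \<Rightarrow> nat \<Rightarrow> nat) pmf" where
  "categories \<equiv> Pi_pmf {0..<n} (\<lambda>_. 0) (\<lambda>_. category_pmf m l k)"

text \<open>The categories of all nodes, read level by level, are k independent copies of the
  one-level labelling.\<close>
lemma categories_transpose:
  "categories = map_pmf (\<lambda>d u r. d r u) (Pi_pmf {0..<k} (\<lambda>_. 0) (\<lambda>_. labels {0..<n}))"
proof (rule pmf_eqI)
  fix c :: "nat \<Rightarrow> nat \<Rightarrow> nat"
  let ?T = "\<lambda>(d::nat \<Rightarrow> nat \<Rightarrow> nat) u r. d r u"
  have "inj ?T" by (rule injI) (simp add: fun_eq_iff)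
  then have "pmf (map_pmf ?T (Pi_pmf {0..<k} (\<lambda>_. 0) (\<lambda>_. labels {0..<n}))) c
      = pmf (Pi_pmf {0..<k} (\<lambda>_. 0) (\<lambda>_. labels {0..<n})) (?T c)"
    using pmf_map_inj'[of ?T _ "?T c"] by simp
  also have "\<dots> = (if \<forall>u r. (u \<notin> {0..<n} \<or> r \<notin> {0..<k}) \<longrightarrow> c u r = 0
                     then \<Prod>r\<in>{0..<k}. \<Prod>u\<in>{0..<n}. pmf (level_pmf m l) (c u r) else 0)"
    by (simp add: pmf_Pi prod_if_0 fun_eq_iff) (metis atLeastLessThan_iff not_gr_zero zero_le)
  also have "\<dots> = pmf categories c"
    unfolding category_pmf_def
    by (simp add: pmf_Pi prod_if_0 fun_eq_iff prod.swap[of _ "{0..<k}"])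
      (metis atLeastLessThan_iff not_gr_zero zero_le)
  finally show "pmf categories c = pmf (map_pmf ?T (Pi_pmf {0..<k} (\<lambda>_. 0) (\<lambda>_. labels {0..<n}))) c"
    by (rule sym)
qed

lemma expectation_prod_edge_prob:
  "measure_pmf.expectation categories (\<lambda>c. \<Prod>(u,v)\<in>F. edge_prob P k (c u) (c v))
   = hom_density {0..<n} F ^ k"
proof -
  have "measure_pmf.expectation categories (\<lambda>c. \<Prod>(u,v)\<in>F. edge_prob P k (c u) (c v))
     = measure_pmf.expectation (Pi_pmf {0..<k} (\<lambda>_. 0) (\<lambda>_. labels {0..<n}))
          (\<lambda>d. \<Prod>r\<in>{0..<k}. (\<lambda>x. \<Prod>(a,b)\<in>F. P (x a) (x b)) (d r))"
    unfolding categories_transpose edge_prob_def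
    by (simp add: case_prod_unfold atLeast0LessThan prod.swap[of _ F])
  also have "\<dots> = (\<Prod>r\<in>{0..<k}. hom_density {0..<n} F)"
    unfolding hom_density_def
    by (rule expectation_prod_Pi_pmf) (auto intro!: integrable_measure_pmf_finite finite_set_pmf_labels
        prod_nonneg simp: P_nonneg case_prod_unfold)
  finally show ?thesis by simp
qed

abbreviation graph :: "(nat \<times> nat) set pmf" where
  "graph \<equiv> mfng n m l P k"

abbreviation edges_given :: "(nat \<Rightarrow> nat \<Rightarrow> nat) \<Rightarrow> (nat \<times> nat \<Rightarrow> bool) pmf" where
  "edges_given c \<equiv> Pi_pmf (node_pairs n) False (\<lambda>(u,v). bernoulli_pmf (edge_prob P k (c u) (c v)))"

lemma graph_eq_bind:
  "graph = categories \<bind> (\<lambda>c. map_pmf (\<lambda>b. {e \<in> node_pairs n. b e}) (edges_given c))"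
  by (simp add: mfng_def map_pmf_def)

lemma set_pmf_graph: "set_pmf graph \<subseteq> Pow (node_pairs n)"
  unfolding graph_eq_bind by auto

lemma finite_set_pmf_graph: "finite (set_pmf graph)"
  by (rule finite_subset[OF set_pmf_graph]) (simp add: finite_node_pairs)

lemma integrable_graph [simp]: "integrable (measure_pmf graph) (f :: _ \<Rightarrow> real)"
  by (rule integrable_measure_pmf_finite[OF finite_set_pmf_graph])

lemma expectation_graph_cong:
  "(\<And>E. E \<subseteq> node_pairs n \<Longrightarrow> f E = g E) \<Longrightarrow>
   measure_pmf.expectation graph f = measure_pmf.expectation graph g"
  by (intro Bochner_Integration.integral_cong_AE AE_pmfI) (use set_pmf_graph in auto)

lemma edge_prob_nonneg: "0 \<le> edge_prob P k a b"
  and edge_prob_le_1: "edge_prob P k a b \<le> 1"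
  unfolding edge_prob_def by (auto intro!: prod_nonneg prod_le_1 simp: P_nonneg P_le_1)

lemma prob_edges_given_superset:
  assumes "F \<subseteq> node_pairs n"
  shows "measure_pmf.prob (edges_given c) {b. F \<subseteq> {e \<in> node_pairs n. b e}}
         = (\<Prod>(u,v)\<in>F. edge_prob P k (c u) (c v))"
proof -
  have "{b. F \<subseteq> {e \<in> node_pairs n. b e}} = Pi (node_pairs n) (\<lambda>e. if e \<in> F then {True} else UNIV)"
    using assms by (auto simp: Pi_def)
  then have "measure_pmf.prob (edges_given c) {b. F \<subseteq> {e \<in> node_pairs n. b e}}
     = (\<Prod>e\<in>node_pairs n. measure_pmf.prob
          ((\<lambda>(u,v). bernoulli_pmf (edge_prob P k (c u) (c v))) e) (if e \<in> F then {True} else UNIV))"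
    by (simp add: measure_Pi_pmf_Pi finite_node_pairs)
  also have "\<dots> = (\<Prod>e\<in>node_pairs n. if e \<in> F then (\<lambda>(u,v). edge_prob P k (c u) (c v)) e else 1)"
    by (intro prod.cong refl) (auto simp: measure_pmf_single edge_prob_nonneg edge_prob_le_1)
  also have "\<dots> = (\<Prod>(u,v)\<in>F. edge_prob P k (c u) (c v))"
    using assms finite_node_pairs by (simp add: prod.If_cases Int_absorb1 case_prod_unfold)
  finally show ?thesis .
qed

lemma prob_graph_superset:
  assumes "F \<subseteq> node_pairs n"
  shows "measure_pmf.prob graph {E. F \<subseteq> E} = hom_density {0..<n} F ^ k"
proof -
  let ?\<rho> = "\<lambda>c. (\<Prod>(u,v)\<in>F. edge_prob P k (c u) (c v))"
  have \<rho>_nonneg: "0 \<le> ?\<rho> c" for c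
    by (auto intro!: prod_nonneg simp: edge_prob_nonneg case_prod_unfold)
  have "integrable categories ?\<rho>"
    by (rule measure_pmf.integrable_const_bound[where B=1])
      (auto intro!: AE_pmfI prod_nonneg prod_le_1 simp: edge_prob_nonneg edge_prob_le_1
        case_prod_unfold abs_prod)
  have "ennreal (measure_pmf.prob graph {E. F \<subseteq> E}) = emeasure graph {E. F \<subseteq> E}"
    by (simp add: measure_pmf.emeasure_eq_measure)
  also have "\<dots> = (\<integral>\<^sup>+c. emeasure (edges_given c) {b. F \<subseteq> {e \<in> node_pairs n. b e}} \<partial>categories)"
    unfolding graph_eq_bind by (simp add: vimage_def)
  also have "\<dots> = (\<integral>\<^sup>+c. ennreal (?\<rho> c) \<partial>categories)"
    by (intro nn_integral_cong)
      (simp add: measure_pmf.emeasure_eq_measure prob_edges_given_superset[OF assms])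
  also have "\<dots> = ennreal (measure_pmf.expectation categories ?\<rho>)"
    by (rule nn_integral_eq_integral[OF \<open>integrable categories ?\<rho>\<close>]) (simp add: \<rho>_nonneg)
  finally have "measure_pmf.prob graph {E. F \<subseteq> E} = measure_pmf.expectation categories ?\<rho>"
    by (subst (asm) ennreal_inj) (auto intro!: Bochner_Integration.integral_nonneg \<rho>_nonneg)
  then show ?thesis by (simp add: expectation_prod_edge_prob)
qed

lemma expectation_card_supersets:
  assumes "finite I" "\<And>i. i \<in> I \<Longrightarrow> F i \<subseteq> node_pairs n"
  shows "measure_pmf.expectation graph (\<lambda>E. real (card {i \<in> I. F i \<subseteq> E}))
         = (\<Sum>i\<in>I. hom_density {0..<n} (F i) ^ k)"
proof -
  have "measure_pmf.expectation graph (\<lambda>E. real (card {i \<in> I. F i \<subseteq> E}))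
      = measure_pmf.expectation graph (\<lambda>E. \<Sum>i\<in>I. indicator {E. F i \<subseteq> E} E)"
    using assms(1) by (intro Bochner_Integration.integral_cong refl)
      (simp add: indicator_def sum.If_cases Int_def)
  also have "\<dots> = (\<Sum>i\<in>I. measure_pmf.prob graph {E. F i \<subseteq> E})"
    by (subst Bochner_Integration.integral_sum) simp_all
  also have "\<dots> = (\<Sum>i\<in>I. hom_density {0..<n} (F i) ^ k)"
    by (intro sum.cong refl) (simp add: prob_graph_superset assms(2))
  finally show ?thesis .
qed

lemma expectation_stars:
  "measure_pmf.expectation graph (\<lambda>E. real (stars n d E))
   = real n * real ((n - 1) choose d) * s_star m l P d ^ k"
proof -
  define I where "I = (SIGMA v:{..<n}. {D. D \<subseteq> {0..<n} - {v} \<and> card D = d})"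
  have "finite I" unfolding I_def by (intro finite_SigmaI) auto
  have card_I: "card I = n * ((n - 1) choose d)"
    unfolding I_def by (subst card_SigmaI) (auto simp: n_subsets)
  have star_count: "stars n d E = card {i \<in> I. (\<lambda>(v,D). star_edges v D) i \<subseteq> E}" for E
    unfolding stars_def I_def
    by (intro arg_cong[where f=card]) (auto simp: nbrs_def adj_def star_edges_def)
  have "measure_pmf.expectation graph (\<lambda>E. real (stars n d E))
      = (\<Sum>i\<in>I. hom_density {0..<n} ((\<lambda>(v,D). star_edges v D) i) ^ k)"
    unfolding star_count by (rule expectation_card_supersets[OF \<open>finite I\<close>])
      (fastforce simp: I_def star_edges_def node_pairs_def subset_iff min_def max_def le_less)
  also have "\<dots> = (\<Sum>i\<in>I. s_star m l P d ^ k)"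
    by (intro sum.cong refl) (auto simp: I_def hom_density_star)
  finally show ?thesis by (simp add: card_I)
qed

lemma expectation_cliques:
  "measure_pmf.expectation graph (\<lambda>E. real (cliques n t E))
   = real (n choose t) * s_clique m l P t ^ k"
proof -
  define I where "I = {S. S \<subseteq> {0..<n} \<and> card S = t}"
  have "finite I" unfolding I_def by auto
  have card_I: "card I = n choose t" unfolding I_def by (subst n_subsets) auto
  have clique_count: "cliques n t E = card {S \<in> I. clique_edges S \<subseteq> E}" for E
    unfolding cliques_def I_def
    by (intro arg_cong[where f=card])
      (auto simp: adj_def clique_edges_def min_def max_def; metis not_less_iff_gr_or_eq)
  have "measure_pmf.expectation graph (\<lambda>E. real (cliques n t E))
      = (\<Sum>S\<in>I. hom_density {0..<n} (clique_edges S) ^ k)"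
    unfolding clique_count by (rule expectation_card_supersets[OF \<open>finite I\<close>])
      (auto simp: I_def clique_edges_def node_pairs_def)
  also have "\<dots> = (\<Sum>S\<in>I. s_clique m l P t ^ k)"
    by (intro sum.cong refl) (auto simp: I_def hom_density_clique)
  finally show ?thesis by (simp add: card_I)
qed

abbreviation edge_density :: real where
  "edge_density \<equiv> \<Sum>i<m. \<Sum>j<m. P i j * l i * l j"

lemma expectation_card_edges:
  "measure_pmf.expectation graph (\<lambda>E. real (card E)) = real (n choose 2) * edge_density ^ k"
proof -
  have "measure_pmf.expectation graph (\<lambda>E. real (card E))
      = measure_pmf.expectation graph (\<lambda>E. real (card {e \<in> node_pairs n. {e} \<subseteq> E}))"
    by (intro expectation_graph_cong arg_cong[where f=real] arg_cong[where f=card]) auto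
  also have "\<dots> = (\<Sum>e\<in>node_pairs n. hom_density {0..<n} {e} ^ k)"
    by (rule expectation_card_supersets[OF finite_node_pairs]) auto
  also have "\<dots> = (\<Sum>e\<in>node_pairs n. edge_density ^ k)"
    by (intro sum.cong refl) (auto simp: node_pairs_def hom_density_edge)
  finally show ?thesis by (simp add: card_node_pairs)
qed

lemma hom_density_wedge:
  assumes "v < n" "x < n" "y < n" "x \<noteq> v" "y \<noteq> v" "x \<noteq> y"
  shows "hom_density {0..<n} {(min v x, max v x), (min v y, max v y)} = s_star m l P 2"
  using hom_density_star[of v "{x,y}" 2] assms by (simp add: star_edges_def)

lemma hom_density_pair:
  assumes e: "e \<in> node_pairs n" and f: "f \<in> node_pairs n"
  shows "hom_density {0..<n} {e,f} =
    (if f = e then edge_density else if f \<in> touching_pairs n e then s_star m l P 2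
     else edge_density\<^sup>2)"
proof -
  obtain a b where ab: "e = (a,b)" "a < b" "b < n" using e by (auto simp: node_pairs_def)
  obtain c d where cd: "f = (c,d)" "c < d" "d < n" using f by (auto simp: node_pairs_def)
  consider "f = e" | "f \<noteq> e" "f \<in> touching_pairs n e" | "f \<noteq> e" "f \<notin> touching_pairs n e"
    by blast
  then show ?thesis
  proof cases
    case 1
    then show ?thesis using ab hom_density_edge by simp
  next
    case 2
    then consider "c = a" | "c = b" | "d = a" | "d = b"
      using ab cd by (auto simp: touching_pairs_def)
    then have "hom_density {0..<n} {e,f} = s_star m l P 2"
    proof cases
      case 1 then show ?thesis
        using hom_density_wedge[of a b d] ab cd 2 by (simp add: min_def max_def)
    next
      case 2 then show ?thesis
        using hom_density_wedge[of b a d] ab cd \<open>f \<noteq> e\<close> by (simp add: min_def max_def)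
    next
      case 3 then show ?thesis
        using hom_density_wedge[of a b c] ab cd by (simp add: min_def max_def insert_commute)
    next
      case 4 then show ?thesis
        using hom_density_wedge[of b a c] ab cd \<open>f \<noteq> e\<close> by (simp add: min_def max_def insert_commute)
    qed
    then show ?thesis using 2 by simp
  next
    case 3
    then have "c \<noteq> a" "c \<noteq> b" "d \<noteq> a" "d \<noteq> b" using ab cd f by (auto simp: touching_pairs_def)
    then show ?thesis using hom_density_disjoint_edges[of a b c d] ab cd 3 by simp
  qed
qed

text \<open>A node pair f is either e itself, touching e, or disjoint from e.\<close>
lemma sum_hom_density_pair:
  assumes e: "e \<in> node_pairs n"
  shows "(\<Sum>f\<in>node_pairs n. hom_density {0..<n} {e,f} ^ k)
    = real (n choose 2) * edge_density ^ (2*k) + (edge_density ^ k - edge_density ^ (2*k))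
      + real (2 * (n - 2)) * (s_star m l P 2 ^ k - edge_density ^ (2*k))"
proof -
  let ?s = edge_density and ?w = "s_star m l P 2"
  have "(\<Sum>f\<in>node_pairs n. hom_density {0..<n} {e,f} ^ k)
      = (\<Sum>f\<in>node_pairs n. ?s ^ (2*k) + ((if f = e then ?s ^ k - ?s ^ (2*k) else 0)
           + (if f \<in> touching_pairs n e then ?w ^ k - ?s ^ (2*k) else 0)))"
    by (intro sum.cong refl) (auto simp: hom_density_pair e touching_pairs_def power_mult)
  also have "\<dots> = real (card (node_pairs n)) * ?s ^ (2*k) + (?s ^ k - ?s ^ (2*k))
      + real (card (touching_pairs n e)) * (?w ^ k - ?s ^ (2*k))"
  proof -
    have "node_pairs n \<inter> touching_pairs n e = touching_pairs n e"
      by (auto simp: touching_pairs_def)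
    then show ?thesis using e finite_node_pairs by (simp add: sum.distrib sum.If_cases)
  qed
  finally show ?thesis by (simp add: card_node_pairs card_touching_pairs e)
qed

lemma expectation_card_edges_squared:
  "measure_pmf.expectation graph (\<lambda>E. (real (card E))\<^sup>2) =
     real (n choose 2) * (real (n choose 2) * edge_density ^ (2*k)
       + (edge_density ^ k - edge_density ^ (2*k))
       + real (2 * (n - 2)) * (s_star m l P 2 ^ k - edge_density ^ (2*k)))"
proof -
  have "measure_pmf.expectation graph (\<lambda>E. (real (card E))\<^sup>2)
      = measure_pmf.expectation graph
          (\<lambda>E. real (card {p \<in> node_pairs n \<times> node_pairs n. (\<lambda>(e,f). {e,f}) p \<subseteq> E}))"
  proof (rule expectation_graph_cong)
    fix E assume "E \<subseteq> node_pairs n"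
    then have "{p \<in> node_pairs n \<times> node_pairs n. (\<lambda>(e,f). {e,f}) p \<subseteq> E} = E \<times> E" by auto
    then show "(real (card E))\<^sup>2
        = real (card {p \<in> node_pairs n \<times> node_pairs n. (\<lambda>(e,f). {e,f}) p \<subseteq> E})"
      by (simp add: card_cartesian_product power2_eq_square)
  qed
  also have "\<dots> = (\<Sum>e\<in>node_pairs n. \<Sum>f\<in>node_pairs n. hom_density {0..<n} {e,f} ^ k)"
    by (subst expectation_card_supersets)
      (auto simp: finite_node_pairs sum.cartesian_product case_prod_unfold)
  finally show ?thesis by (simp add: sum_hom_density_pair card_node_pairs)
qed

lemma variance_card_edges:
  assumes "n \<ge> 2"
  shows "measure_pmf.variance graph (\<lambda>E. real (card E)) =
     real (n choose 2) * edge_density ^ k * (1 - real (n choose 2) * edge_density ^ k)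
     + 2 * measure_pmf.expectation graph (\<lambda>E. real (stars n 2 E))
     + real (n choose 2) * real ((n - 2) choose 2) * edge_density ^ (2 * k)"
proof -
  let ?s = edge_density and ?N = "real (n choose 2)"
  have "measure_pmf.variance graph (\<lambda>E. real (card E))
      = measure_pmf.expectation graph (\<lambda>E. (real (card E))\<^sup>2)
        - (measure_pmf.expectation graph (\<lambda>E. real (card E)))\<^sup>2"
    by (rule measure_pmf.variance_eq) simp_all
  also have "\<dots> = ?N * (?N * ?s ^ (2*k) + (?s ^ k - ?s ^ (2*k))
        + real (2 * (n - 2)) * (s_star m l P 2 ^ k - ?s ^ (2*k))) - (?N * ?s ^ k)\<^sup>2"
    by (simp only: expectation_card_edges_squared expectation_card_edges)
  also have "\<dots> = ?N * ?s ^ k * (1 - ?N * ?s ^ k)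
     + 2 * (real n * real ((n - 1) choose 2) * s_star m l P 2 ^ k)
     + ?N * real ((n - 2) choose 2) * ?s ^ (2 * k)"
  proof -
    have "real (n - 1) = real n - 1" "real (n - 2) = real n - 2" using assms by auto
    then show ?thesis by (simp add: real_choose_two power_mult power2_eq_square field_simps)
  qed
  finally show ?thesis by (simp only: expectation_stars)
qed

lemma expectation_stars_eq_deg_count:
  assumes "d \<le> n - 1"
  shows "measure_pmf.expectation graph (\<lambda>E. real (stars n d E))
     = measure_pmf.expectation graph (\<lambda>E. real (deg_count n d E))
       + (\<Sum>i = d + 1..n - 1. real (i choose d) * measure_pmf.expectation graph (\<lambda>E. real (deg_count n i E)))"
proof -
  let ?f = "\<lambda>i. real (i choose d) * measure_pmf.expectation graph (\<lambda>E. real (deg_count n i E))"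
  have "measure_pmf.expectation graph (\<lambda>E. real (stars n d E)) = (\<Sum>i\<in>{0..n-1}. ?f i)"
    by (simp add: stars_eq_sum_deg_count Bochner_Integration.integral_sum)
  also have "\<dots> = (\<Sum>i\<in>{d..n-1}. ?f i)"
    by (rule sum.mono_neutral_right) auto
  also have "{d..n-1} = insert d {d+1..n-1}" using assms by auto
  finally show ?thesis by simp
qed

end

theorem corollary2:
  fixes n m k :: nat and l :: "nat \<Rightarrow> real" and P :: "nat \<Rightarrow> nat \<Rightarrow> real"
  assumes "m \<ge> 1" and "k \<ge> 1" and "n \<ge> 2"
    and "\<And>i. i < m \<Longrightarrow> l i \<ge> 0"
    and "(\<Sum>i<m. l i) = 1"
    and "\<And>i j. i < m \<Longrightarrow> j < m \<Longrightarrow> P i j = P j i"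
    and "\<And>i j. i < m \<Longrightarrow> j < m \<Longrightarrow> 0 \<le> P i j \<and> P i j \<le> 1"
  shows
   "let G = mfng n m l P k;
        s = (\<Sum>i<m. \<Sum>j<m. P i j * l i * l j);
        ES = (\<lambda>d. measure_pmf.expectation G (\<lambda>E. real (stars n d E)));
        ED = (\<lambda>d. measure_pmf.expectation G (\<lambda>E. real (deg_count n d E)))
    in (\<forall>d. 1 \<le> d \<and> d \<le> n - 1 \<longrightarrow>
           ES d = real n * real ((n - 1) choose d) * (s_star m l P d) ^ k)
     \<and> ES 2 = real n * real ((n - 1) choose 2) *
           (\<Sum>i1<m. \<Sum>i2<m. \<Sum>i3<m. P i1 i2 * P i1 i3 * l i1 * l i2 * l i3) ^ k
     \<and> measure_pmf.variance G (\<lambda>E. real (card E)) =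
           real (n choose 2) * s ^ k * (1 - real (n choose 2) * s ^ k) + 2 * ES 2
           + real (n choose 2) * real ((n - 2) choose 2) * s ^ (2 * k)
     \<and> (\<forall>t. 2 \<le> t \<and> t \<le> n \<longrightarrow>
           measure_pmf.expectation G (\<lambda>E. real (cliques n t E))
             = real (n choose t) * (s_clique m l P t) ^ k)
     \<and> measure_pmf.expectation G (\<lambda>E. real (cliques n 3 E))
         = real (n choose 3) *
           (\<Sum>i<m. \<Sum>j<m. \<Sum>t<m. P i j * P i t * P j t * l i * l j * l t) ^ k
     \<and> ED (n - 1) = ES (n - 1)
     \<and> (\<forall>d. 1 \<le> d \<and> d \<le> n - 2 \<longrightarrow>
           ED d = ES d - (\<Sum>i = d + 1..n - 1. real (i choose d) * ED i))"
proof -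
  interpret mfng_model n m k l "trunc_matrix m P"
    using assms by unfold_locales (auto simp: trunc_matrix_def)
  have graph: "mfng n m l P k = graph" using mfng_trunc_matrix[OF assms(4,5)] by simp
  have s: "(\<Sum>i<m. \<Sum>j<m. P i j * l i * l j) = edge_density"
    using s_star_1[of m l P] s_star_1[of m l "trunc_matrix m P"] by (simp add: s_star_trunc_matrix)
  note stars = expectation_stars[unfolded s_star_trunc_matrix]
  note cliques = expectation_cliques[unfolded s_clique_trunc_matrix]
  note degrees = expectation_stars_eq_deg_count
  show ?thesis
    unfolding Let_def graph s
  proof (intro conjI allI impI)
    show "measure_pmf.expectation graph (\<lambda>E. real (deg_count n (n - 1) E))
        = measure_pmf.expectation graph (\<lambda>E. real (stars n (n - 1) E))"
      using degrees[of "n - 1"] \<open>n \<ge> 2\<close> by simp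
    fix d assume "1 \<le> d \<and> d \<le> n - 2"
    then have "d \<le> n - 1" by linarith
    then show "measure_pmf.expectation graph (\<lambda>E. real (deg_count n d E))
        = measure_pmf.expectation graph (\<lambda>E. real (stars n d E))
          - (\<Sum>i = d + 1..n - 1. real (i choose d)
               * measure_pmf.expectation graph (\<lambda>E. real (deg_count n i E)))"
      using degrees by simp
  qed (simp_all add: stars cliques s_star_2 s_clique_3 variance_card_edges[OF \<open>n \<ge> 2\<close>])
qed

end
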